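(* Let $0<\epsilon\le0.66$ and let $a,b,c\in\mathbb R^d$ be distinct points such that $(a,b,c)$ is compatible (with respect to $\epsilon$) and $0.6231\,\frac{d(c,b)}{d(a,b)}\le1$. Then $$\angle abc>51.45^\circ+\arccos\!\left(0.6231\,\frac{d(c,b)}{d(a,b)}\right).$$ In particular, $\angle abc>102.9^\circ$.
   Context: $d(x,y)$ is Euclidean distance in $\mathbb R^d$ ($d\ge2$) and $B_x(r)$ is the closed ball of radius $r$ about $x$. For $a\ne b$, $X(a,b)$ is the set of $x\in\mathbb R^d$ with $d(x,a)=d(x,b)=\frac{d(a,b)}{\epsilon\sqrt{4-\epsilon^2}}$. A triple $(a,b,c)$ is compatible if $c\notin B_x(d(x,b))$ for all $x\in X(a,b)$ and $a\notin B_y(d(y,b))$ for all $y\in X(b,c)$. Angles are measured in degrees in $[0^\circ,180^\circ]$. *)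

theory Defs
  imports "HOL-Analysis.Analysis"
begin

definition angle_deg :: "'a::euclidean_space \<Rightarrow> 'a \<Rightarrow> 'a \<Rightarrow> real" where
  "angle_deg a b c =
     arccos (((a - b) \<bullet> (c - b)) / (norm (a - b) * norm (c - b))) * 180 / pi"

definition Xset :: "real \<Rightarrow> 'a::euclidean_space \<Rightarrow> 'a \<Rightarrow> 'a set" where
  "Xset eps a b = {x. dist x a = dist a b / (eps * sqrt (4 - eps\<^sup>2)) \<and>
                      dist x b = dist a b / (eps * sqrt (4 - eps\<^sup>2))}"

definition compatible :: "real \<Rightarrow> 'a::euclidean_space \<Rightarrow> 'a \<Rightarrow> 'a \<Rightarrow> bool" where
  "compatible eps a b c \<longleftrightarrow>
     (\<forall>x \<in> Xset eps a b. c \<notin> cball x (dist x b)) \<and>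
     (\<forall>y \<in> Xset eps b c. a \<notin> cball y (dist y b))"

end

theory Submission
  imports Defs
begin

text \<open>
  A point x of X(a,b) sees the segment ab under the angle 2\<alpha>, where cos \<alpha> = 1 - \<epsilon>^2/2.
  Taking x in the plane of a, b, c on the same side of the line ab as c, the condition
  c \<notin> B_x(d(x,b)) becomes sin(\<angle>abc + \<alpha>) < t sin \<alpha> with t = d(c,b)/d(a,b); the second
  half of compatibility gives the same with 1/t. Since sin(\<angle>abc + \<alpha>) < sin \<alpha> forces
  \<angle>abc + \<alpha> > 90\<degree>, inverting the cosine yields
  \<angle>abc > 90\<degree> - \<alpha> + arccos (min(t, 1/t) sin \<alpha>), and for \<epsilon> \<le> 0.66 we have
  \<alpha> < 38.55\<degree> and sin \<alpha> \<le> 0.6231.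
\<close>

definition vertex_angle :: "'a::euclidean_space \<Rightarrow> 'a \<Rightarrow> 'a \<Rightarrow> real" where
  "vertex_angle a b c = arccos (((a - b) \<bullet> (c - b)) / (norm (a - b) * norm (c - b)))"

lemma angle_deg_eq_vertex_angle: "angle_deg a b c = vertex_angle a b c * 180 / pi"
  by (simp add: angle_deg_def vertex_angle_def)

lemma vertex_angle_commute: "vertex_angle a b c = vertex_angle c b a"
  by (simp add: vertex_angle_def inner_commute mult.commute)

lemma inner_div_norms_bounds:
  fixes x y :: "'a::real_inner"
  shows "-1 \<le> x \<bullet> y / (norm x * norm y)" "x \<bullet> y / (norm x * norm y) \<le> 1"
  using Cauchy_Schwarz_ineq2[of x y]
  by (auto simp: divide_le_eq le_divide_eq abs_le_iff)

lemma cos_vertex_angle: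
  "cos (vertex_angle a b c) = (a - b) \<bullet> (c - b) / (norm (a - b) * norm (c - b))"
  using inner_div_norms_bounds[of "a - b" "c - b"] by (simp add: vertex_angle_def)

lemma vertex_angle_bounds: "0 \<le> vertex_angle a b c" "vertex_angle a b c \<le> pi"
  using arccos_bounded[OF inner_div_norms_bounds[of "a - b" "c - b"]]
  by (auto simp: vertex_angle_def)

lemma inner_eq_cos_vertex_angle:
  "(a - b) \<bullet> (c - b) = norm (a - b) * norm (c - b) * cos (vertex_angle a b c)"
  by (cases "a = b \<or> c = b") (auto simp: cos_vertex_angle)

lemma gram_sqrt_eq_sin_vertex_angle:
  "sqrt ((norm (a - b))\<^sup>2 * (norm (c - b))\<^sup>2 - ((a - b) \<bullet> (c - b))\<^sup>2)
     = norm (a - b) * norm (c - b) * sin (vertex_angle a b c)"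
proof -
  have "(norm (a - b))\<^sup>2 * (norm (c - b))\<^sup>2 - ((a - b) \<bullet> (c - b))\<^sup>2
          = (norm (a - b) * norm (c - b))\<^sup>2 * (1 - (cos (vertex_angle a b c))\<^sup>2)"
    unfolding inner_eq_cos_vertex_angle[of a b c] by (simp add: power_mult_distrib right_diff_distrib)
  moreover have "0 \<le> sin (vertex_angle a b c)"
    by (intro sin_ge_zero vertex_angle_bounds)
  ultimately show ?thesis by (simp add: real_sqrt_mult sin_squared_eq[symmetric])
qed

text \<open>Half the angle under which the segment ab is seen from a point of X(a,b)
  (see \<open>Xset_altdef\<close>).\<close>

definition Xset_angle :: "real \<Rightarrow> real" where
  "Xset_angle eps = arccos (1 - eps\<^sup>2 / 2)"

lemma cos_Xset_angle:
  assumes "0 \<le> eps" "eps \<le> 2"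
  shows "cos (Xset_angle eps) = 1 - eps\<^sup>2 / 2"
proof -
  have "eps\<^sup>2 \<le> 2\<^sup>2" using assms by (intro power_mono) auto
  then show ?thesis by (simp add: Xset_angle_def cos_arccos)
qed

lemma sin_Xset_angle:
  assumes "0 \<le> eps" "eps \<le> 2"
  shows "sin (Xset_angle eps) = eps * sqrt (4 - eps\<^sup>2) / 2"
proof -
  have "eps\<^sup>2 \<le> 2\<^sup>2" using assms by (intro power_mono) auto
  moreover have "1 - (1 - eps\<^sup>2 / 2)\<^sup>2 = (eps / 2)\<^sup>2 * (4 - eps\<^sup>2)"
    by (simp add: power2_eq_square field_simps)
  ultimately show ?thesis using assms by (simp add: Xset_angle_def sin_arccos real_sqrt_mult)
qed

lemma sin_Xset_angle_pos:
  assumes "0 < eps" "eps < 2"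
  shows "0 < sin (Xset_angle eps)"
proof -
  have "eps\<^sup>2 < 2\<^sup>2" using assms by (intro power_strict_mono) auto
  then show ?thesis using assms by (simp add: sin_Xset_angle)
qed

lemma Xset_angle_bounds:
  assumes "0 < eps" "eps < sqrt 2"
  shows "0 < Xset_angle eps" "Xset_angle eps < pi / 2"
proof -
  have "eps\<^sup>2 < (sqrt 2)\<^sup>2" using assms by (intro power_strict_mono) auto
  then have "0 < 1 - eps\<^sup>2 / 2" "1 - eps\<^sup>2 / 2 < 1" using assms(1) by simp_all
  then have "arccos 1 < arccos (1 - eps\<^sup>2 / 2)" "arccos (1 - eps\<^sup>2 / 2) < arccos 0"
    by (intro arccos_less_arccos; simp)+
  then show "0 < Xset_angle eps" "Xset_angle eps < pi / 2" by (simp_all add: Xset_angle_def)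
qed

lemma Xset_altdef:
  assumes "0 < eps" "eps < 2"
  shows "Xset eps p q = {x. dist x p = dist p q / (2 * sin (Xset_angle eps)) \<and>
                            dist x q = dist p q / (2 * sin (Xset_angle eps))}"
  using assms by (simp add: Xset_def sin_Xset_angle)

lemma exists_unit_orthogonal:
  fixes u :: "'a::euclidean_space"
  assumes "DIM('a) \<ge> 2"
  obtains w where "norm w = 1" "w \<bullet> u = 0"
proof -
  have "dim {u} < DIM('a)"
    using dim_le_card[of "{u}"] assms by auto
  then obtain x where "x \<noteq> 0" "\<And>y. y \<in> span {u} \<Longrightarrow> orthogonal x y"
    using orthogonal_to_subspace_exists by blast
  then have "orthogonal x u" by (simp add: span_base)
  then show ?thesis using that[of "x /\<^sub>R norm x"] \<open>x \<noteq> 0\<close>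
    by (simp add: orthogonal_def)
qed

text \<open>The square root is |e| times the length of the component of v orthogonal to e.\<close>

lemma exists_unit_orthogonal_attaining:
  fixes e v :: "'a::euclidean_space"
  assumes "DIM('a) \<ge> 2"
  obtains w where "norm w = 1" "w \<bullet> e = 0"
    "norm e * (v \<bullet> w) = sqrt ((norm e)\<^sup>2 * (norm v)\<^sup>2 - (e \<bullet> v)\<^sup>2)"
proof -
  define g where "g = v - (v \<bullet> e / (e \<bullet> e)) *\<^sub>R e"
  have ge: "g \<bullet> e = 0"
    by (cases "e = 0") (simp_all add: g_def inner_diff_left)
  then have vg: "v \<bullet> g = g \<bullet> g"
    by (simp add: g_def inner_diff_left inner_diff_right inner_commute)
  have lagrange: "(norm e)\<^sup>2 * (norm g)\<^sup>2 = (norm e)\<^sup>2 * (norm v)\<^sup>2 - (e \<bullet> v)\<^sup>2"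
  proof (cases "e = 0")
    case False
    have "g \<bullet> g = v \<bullet> v - (v \<bullet> e)\<^sup>2 / (e \<bullet> e)"
      by (simp add: vg[symmetric]) (simp add: g_def inner_diff_right power2_eq_square)
    then show ?thesis
      using False by (simp add: power2_norm_eq_inner field_simps inner_commute)
  qed simp
  obtain w where w: "norm w = 1" "w \<bullet> e = 0" and vw: "v \<bullet> w = norm g"
  proof (cases "g = 0")
    case True
    obtain w where w: "norm w = 1" "w \<bullet> e = 0" using exists_unit_orthogonal assms by blast
    have "v = (v \<bullet> e / (e \<bullet> e)) *\<^sub>R e" using True by (simp add: g_def)
    then have "v \<bullet> w = 0" using w(2) by (metis inner_commute inner_scaleR_left mult_zero_right)
    then show ?thesis using that w True by simp
  next
    case False
    then show ?thesis using that[of "g /\<^sub>R norm g"] ge vg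
      by (simp add: power2_norm_eq_inner[symmetric] power2_eq_square)
  qed
  have "norm e * (v \<bullet> w) = sqrt ((norm e)\<^sup>2 * (norm g)\<^sup>2)"
    by (simp add: vw real_sqrt_mult)
  then show ?thesis using that w lagrange by simp
qed

lemma midpoint_eq_add_half: "midpoint p q = q + (1 / 2) *\<^sub>R (p - q)"
  by (simp add: midpoint_def scaleR_diff_right scaleR_add_right)
     (metis add_diff_cancel_left' scaleR_half_double scaleR_add_right add.commute diff_add_cancel)

lemma dist_midpoint_add_orthogonal:
  assumes "w \<bullet> (p - q) = 0"
  shows "(dist (midpoint p q + h *\<^sub>R w) p)\<^sup>2 = (dist p q / 2)\<^sup>2 + (h * norm w)\<^sup>2"
proof -
  have half: "midpoint p q - p = (1 / 2) *\<^sub>R (q - p)"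
    by (subst midpoint_sym) (simp add: midpoint_eq_add_half)
  have "orthogonal (midpoint p q - p) (h *\<^sub>R w)"
    using assms by (simp add: half orthogonal_def inner_commute inner_diff_left inner_diff_right)
  then have "(norm ((midpoint p q - p) + h *\<^sub>R w))\<^sup>2 = (norm (midpoint p q - p))\<^sup>2 + (norm (h *\<^sub>R w))\<^sup>2"
    by (rule norm_add_Pythagorean)
  then show ?thesis
    by (simp add: dist_norm dist_midpoint(3)[of p q, unfolded dist_norm] algebra_simps power_mult_distrib)
qed

lemma apex_in_Xset:
  assumes "0 < eps" "eps < 2" "norm w = 1" "w \<bullet> (p - q) = 0"
  shows "midpoint p q + (dist p q / 2 * cot (Xset_angle eps)) *\<^sub>R w \<in> Xset eps p q"
proof -
  define s where "s = sin (Xset_angle eps)"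
  define h where "h = dist p q / 2 * cot (Xset_angle eps)"
  define x where "x = midpoint p q + h *\<^sub>R w"
  have s0: "0 < s" using sin_Xset_angle_pos assms by (simp add: s_def)
  have "(dist p q / 2)\<^sup>2 + h\<^sup>2 = (dist p q / 2)\<^sup>2 * (1 + (cot (Xset_angle eps))\<^sup>2)"
    by (simp add: h_def power_mult_distrib power_divide algebra_simps)
  also have "1 + (cot (Xset_angle eps))\<^sup>2 = 1 / s\<^sup>2"
    using s0 sin_cos_squared_add[of "Xset_angle eps"]
    by (simp add: s_def cot_def power_divide field_simps)
  finally have radius: "(dist p q / 2)\<^sup>2 + h\<^sup>2 = (dist p q / (2 * s))\<^sup>2"
    by (simp add: power_divide power_mult_distrib)
  have "(dist x p)\<^sup>2 = (dist p q / (2 * s))\<^sup>2" "(dist x q)\<^sup>2 = (dist p q / (2 * s))\<^sup>2"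
    using dist_midpoint_add_orthogonal[of w p q h] dist_midpoint_add_orthogonal[of w q p h] assms(3,4)
    by (simp_all add: x_def radius midpoint_sym dist_commute inner_diff_right)
  then show ?thesis using assms s0 by (simp add: Xset_altdef x_def h_def s_def)
qed

lemma outside_Xset_balls_inner_bound:
  assumes "0 < eps" "eps < 2" "norm w = 1" "w \<bullet> (p - q) = 0"
    and outside: "\<forall>x \<in> Xset eps p q. z \<notin> cball x (dist x q)"
  shows "(p - q) \<bullet> (z - q) + dist p q * cot (Xset_angle eps) * ((z - q) \<bullet> w)
           < (norm (z - q))\<^sup>2"
proof -
  define h where "h = dist p q / 2 * cot (Xset_angle eps)"
  define m where "m = (1 / 2) *\<^sub>R (p - q) + h *\<^sub>R w"
  have "q + m = midpoint p q + h *\<^sub>R w"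
    by (simp add: m_def midpoint_eq_add_half)
  then have "q + m \<in> Xset eps p q"
    using apex_in_Xset[OF assms(1-4)] by (simp add: h_def)
  then have "dist (q + m) q < dist (q + m) z"
    using outside by (auto simp: not_le)
  then have "(norm m)\<^sup>2 < (norm ((z - q) - m))\<^sup>2"
    by (simp add: dist_norm norm_minus_commute algebra_simps power_strict_mono)
  also have "\<dots> = (norm (z - q))\<^sup>2 - 2 * ((z - q) \<bullet> m) + (norm m)\<^sup>2"
    by (simp add: power2_norm_eq_inner inner_diff_left inner_diff_right inner_commute)
  finally have "2 * ((z - q) \<bullet> m) < (norm (z - q))\<^sup>2" by simp
  moreover have "2 * ((z - q) \<bullet> m) = (p - q) \<bullet> (z - q) + 2 * h * ((z - q) \<bullet> w)"
    by (simp add: m_def inner_add_right inner_commute)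
  ultimately show ?thesis by (simp add: h_def)
qed

lemma outside_Xset_balls_sin_bound:
  fixes p q z :: "'a::euclidean_space"
  assumes "DIM('a) \<ge> 2" "0 < eps" "eps < 2" "p \<noteq> q"
    and outside: "\<forall>x \<in> Xset eps p q. z \<notin> cball x (dist x q)"
  shows "sin (vertex_angle p q z + Xset_angle eps)
           < dist z q / dist p q * sin (Xset_angle eps)"
proof -
  define L where "L = dist p q"
  define r where "r = dist z q"
  define \<phi> where "\<phi> = vertex_angle p q z"
  define \<alpha> where "\<alpha> = Xset_angle eps"
  have L0: "0 < L" using assms(4) by (simp add: L_def)
  have s0: "0 < sin \<alpha>" using sin_Xset_angle_pos assms(2,3) by (simp add: \<alpha>_def)
  obtain w where w: "norm w = 1" "w \<bullet> (p - q) = 0"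
    and "norm (p - q) * ((z - q) \<bullet> w) = norm (p - q) * norm (z - q) * sin (vertex_angle p q z)"
    by (rule exists_unit_orthogonal_attaining[OF assms(1), of "p - q" "z - q",
                                              unfolded gram_sqrt_eq_sin_vertex_angle])
  then have vw: "(z - q) \<bullet> w = r * sin \<phi>"
    using L0 by (simp add: L_def r_def \<phi>_def dist_norm)
  have "L * r * cos \<phi> + L * cot \<alpha> * (r * sin \<phi>) < r\<^sup>2"
    using outside_Xset_balls_inner_bound[OF assms(2,3) w outside]
    by (simp only: vw inner_eq_cos_vertex_angle[of p q z] L_def r_def \<phi>_def \<alpha>_def dist_norm)
  then have "(L * r * cos \<phi> + L * cot \<alpha> * (r * sin \<phi>)) * sin \<alpha> < r\<^sup>2 * sin \<alpha>"
    using s0 by (rule mult_strict_right_mono)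
  moreover have "(L * r * cos \<phi> + L * cot \<alpha> * (r * sin \<phi>)) * sin \<alpha> = L * r * sin (\<phi> + \<alpha>)"
    using s0 by (simp add: sin_add cot_def field_simps)
  ultimately have "L * r * sin (\<phi> + \<alpha>) < r * (r * sin \<alpha>)"
    by (simp add: power2_eq_square mult_ac)
  moreover have "0 < r"
    using \<open>L * r * cos \<phi> + L * cot \<alpha> * (r * sin \<phi>) < r\<^sup>2\<close> zero_le_dist[of z q]
    by (cases "r = 0") (auto simp: r_def)
  ultimately have "sin (\<phi> + \<alpha>) < r / L * sin \<alpha>"
    using L0 by (simp add: field_simps)
  then show ?thesis by (simp add: L_def r_def \<phi>_def \<alpha>_def)
qed

lemma pi_half_minus_add_arccos_lt_of_sin_add_lt:
  fixes \<phi> \<alpha> m :: real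
  assumes "0 \<le> \<phi>" "\<phi> \<le> pi" "0 < \<alpha>" "\<alpha> < pi / 2" "0 < m" "m \<le> 1"
    and sin_lt: "sin (\<phi> + \<alpha>) < m * sin \<alpha>"
  shows "pi / 2 - \<alpha> + arccos (m * sin \<alpha>) < \<phi>"
proof -
  have sin_\<alpha>: "0 < sin \<alpha>" "sin \<alpha> \<le> 1" using assms(3,4) pi_gt3 by (simp_all add: sin_gt_zero)
  have "pi / 2 < \<phi> + \<alpha>"
  proof (rule ccontr)
    assume "\<not> ?thesis"
    then have "sin \<alpha> \<le> sin (\<phi> + \<alpha>)" using assms by (intro sin_monotone_2pi_le) auto
    moreover have "m * sin \<alpha> \<le> sin \<alpha>" using sin_\<alpha> assms(6) by (simp add: mult_left_le_one_le)
    ultimately show False using sin_lt by linarith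
  qed
  define \<theta> where "\<theta> = \<phi> + \<alpha> - pi / 2"
  have \<theta>: "0 \<le> \<theta>" "\<theta> \<le> pi" using assms \<open>pi / 2 < \<phi> + \<alpha>\<close> by (auto simp: \<theta>_def)
  have "cos \<theta> = sin (\<phi> + \<alpha>)"
    by (simp add: \<theta>_def cos_diff)
  have m_sin: "-1 \<le> m * sin \<alpha>" "m * sin \<alpha> \<le> 1"
    using sin_\<alpha> assms(5,6) mult_pos_pos[of m "sin \<alpha>"] mult_le_one[of m "sin \<alpha>"] by linarith+
  have "cos \<theta> < cos (arccos (m * sin \<alpha>))"
    using m_sin sin_lt \<open>cos \<theta> = sin (\<phi> + \<alpha>)\<close> by simp
  then have "arccos (m * sin \<alpha>) < \<theta>"
    using \<theta> arccos_bounded[OF m_sin] by (subst (asm) cos_mono_less_eq) auto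
  then show ?thesis by (simp add: \<theta>_def)
qed

lemma compatible_vertex_angle_gt:
  fixes a b c :: "'a::euclidean_space"
  assumes "DIM('a) \<ge> 2" "0 < eps" "eps < sqrt 2" "a \<noteq> b" "b \<noteq> c"
    and "compatible eps a b c"
  shows "pi / 2 - Xset_angle eps
           + arccos (min (dist c b / dist a b) (dist a b / dist c b) * sin (Xset_angle eps))
         < vertex_angle a b c"
proof (rule pi_half_minus_add_arccos_lt_of_sin_add_lt)
  have eps2: "eps < 2" using assms(3) sqrt2_less_2 by linarith
  have "Xset eps b c = Xset eps c b" by (auto simp: Xset_def dist_commute)
  then have "sin (vertex_angle a b c + Xset_angle eps) < dist c b / dist a b * sin (Xset_angle eps)"
       and "sin (vertex_angle a b c + Xset_angle eps) < dist a b / dist c b * sin (Xset_angle eps)"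
    using outside_Xset_balls_sin_bound[OF assms(1,2) eps2, of a b c]
          outside_Xset_balls_sin_bound[OF assms(1,2) eps2, of c b a]
          assms(4-6) vertex_angle_commute[of c b a]
    by (auto simp: compatible_def)
  then show "sin (vertex_angle a b c + Xset_angle eps)
               < min (dist c b / dist a b) (dist a b / dist c b) * sin (Xset_angle eps)"
    by (simp add: min_def)
  show "0 < min (dist c b / dist a b) (dist a b / dist c b)"
    using assms(4,5) by simp
  show "min (dist c b / dist a b) (dist a b / dist c b) \<le> 1"
    using assms(4,5) by (cases "dist c b \<le> dist a b") (auto simp: min_le_iff_disj)
qed (use vertex_angle_bounds Xset_angle_bounds[OF assms(2,3)] in auto)

text \<open>0.6728 is just below 38.55\<degree> in radians.\<close>

lemma cos_0_6728_lt: "cos (0.6728::real) < 0.7822"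
proof -
  define y :: real where "y = 0.6728"
  obtain t where "cos y = (\<Sum>m<8. cos_coeff m * y ^ m) + cos (t + 1 / 2 * real 8 * pi) / fact 8 * y ^ 8"
    using Maclaurin_cos_expansion2[of y 8] by (auto simp: y_def)
  moreover have "(\<Sum>m<8. cos_coeff m * y ^ m) = 1 - y\<^sup>2 / 2 + y ^ 4 / 24 - y ^ 6 / 720"
    by (simp add: lessThan_nat_numeral cos_coeff_def fact_numeral)
  moreover have "cos (t + 1 / 2 * real 8 * pi) / fact 8 * y ^ 8 \<le> y ^ 8 / 40320"
    by (simp add: fact_numeral y_def)
  moreover have "1 - y\<^sup>2 / 2 + y ^ 4 / 24 - y ^ 6 / 720 + y ^ 8 / 40320 < 0.7822"
    by (simp add: y_def power_divide)
  ultimately show ?thesis by (simp add: y_def)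
qed

lemma less_sqrt_2_of_le_0_66:
  assumes "eps \<le> (0.66::real)"
  shows "eps < sqrt 2"
proof -
  have "eps < 1" "1 < sqrt (2::real)" using assms by simp_all
  then show ?thesis by linarith
qed

lemma cos_Xset_angle_ge:
  assumes "0 < eps" "eps \<le> 0.66"
  shows "0.7822 \<le> cos (Xset_angle eps)"
proof -
  have "eps\<^sup>2 \<le> 0.66\<^sup>2" using assms by (intro power_mono) auto
  then show ?thesis using assms by (simp add: cos_Xset_angle power_divide)
qed

lemma Xset_angle_lt:
  assumes "0 < eps" "eps \<le> 0.66"
  shows "Xset_angle eps < 38.55 * pi / 180"
proof -
  have deg: "0.6728 \<le> 38.55 * pi / 180" "38.55 * pi / 180 \<le> pi"
    using pi_approx by auto
  have "cos (38.55 * pi / 180) \<le> cos 0.6728"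
    using deg by (intro cos_monotone_0_pi_le) auto
  also have "\<dots> < cos (Xset_angle eps)"
    using cos_0_6728_lt cos_Xset_angle_ge[OF assms] by linarith
  finally have "cos (38.55 * pi / 180) < cos (Xset_angle eps)" .
  moreover have "eps < sqrt 2" using assms(2) by (rule less_sqrt_2_of_le_0_66)
  ultimately show ?thesis
    using deg Xset_angle_bounds[OF assms(1)] by (subst (asm) cos_mono_less_eq) auto
qed

lemma sin_Xset_angle_le:
  assumes "0 < eps" "eps \<le> 0.66"
  shows "sin (Xset_angle eps) \<le> 0.6231"
proof -
  have "0.7822\<^sup>2 \<le> (cos (Xset_angle eps))\<^sup>2"
    using cos_Xset_angle_ge[OF assms] by (intro power_mono) auto
  then have "(sin (Xset_angle eps))\<^sup>2 \<le> 0.6231\<^sup>2"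
    by (simp add: sin_squared_eq power_divide)
  then show ?thesis by (rule power2_le_imp_le) simp
qed

lemma arccos_min_mult_sin_ge:
  fixes \<alpha> t k :: real
  assumes "0 < \<alpha>" "\<alpha> < pi / 2" "sin \<alpha> \<le> k" "0 < t" "k * t \<le> 1"
  shows "arccos (k * t) \<le> arccos (min t (1 / t) * sin \<alpha>)"
    and "pi / 2 - \<alpha> \<le> arccos (min t (1 / t) * sin \<alpha>)"
proof -
  define m where "m = min t (1 / t)"
  have sin_\<alpha>: "0 < sin \<alpha>" using assms(1,2) pi_gt3 by (intro sin_gt_zero) auto
  have m: "0 < m" "m \<le> t" "m \<le> 1"
    using assms(4) by (auto simp: m_def min_le_iff_disj le_divide_eq_1)
  have "-1 \<le> m * sin \<alpha>" using m sin_\<alpha> mult_pos_pos[of m "sin \<alpha>"] by linarith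
  moreover have "m * sin \<alpha> \<le> k * t"
    using m assms(3) sin_\<alpha> by (subst mult.commute, intro mult_mono) auto
  moreover have "m * sin \<alpha> \<le> sin \<alpha>"
    using m sin_\<alpha> by (intro mult_left_le_one_le) auto
  moreover have "arccos (sin \<alpha>) = pi / 2 - \<alpha>"
    using arccos_cos[of "pi / 2 - \<alpha>"] assms(1,2) by (simp add: cos_sin_eq)
  ultimately show "arccos (k * t) \<le> arccos (m * sin \<alpha>)" "pi / 2 - \<alpha> \<le> arccos (m * sin \<alpha>)"
    using assms(5) arccos_le_arccos by (metis sin_le_one order_trans)+
qed

theorem lemma3p13:
  fixes a b c :: "'a::euclidean_space" and eps :: real
  assumes "DIM('a) \<ge> 2"
    and "0 < eps" and "eps \<le> 0.66"
    and "a \<noteq> b" and "b \<noteq> c" and "a \<noteq> c"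
    and "compatible eps a b c"
    and "0.6231 * (dist c b / dist a b) \<le> 1"
  shows "angle_deg a b c > 51.45 + arccos (0.6231 * (dist c b / dist a b)) * 180 / pi
         \<and> angle_deg a b c > 102.9"
proof -
  define t where "t = dist c b / dist a b"
  define \<alpha> where "\<alpha> = Xset_angle eps"
  define \<phi> where "\<phi> = vertex_angle a b c"
  have eps: "eps < sqrt 2" using assms(3) by (rule less_sqrt_2_of_le_0_66)
  have t: "0 < t" "0.6231 * t \<le> 1" using assms(4,5,8) by (simp_all add: t_def)
  have "pi / 2 - \<alpha> + arccos (min t (1 / t) * sin \<alpha>) < \<phi>"
    using compatible_vertex_angle_gt[OF assms(1,2) eps assms(4,5,7)] by (simp add: t_def \<alpha>_def \<phi>_def)
  moreover have "arccos (0.6231 * t) \<le> arccos (min t (1 / t) * sin \<alpha>)"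
    and "pi / 2 - \<alpha> \<le> arccos (min t (1 / t) * sin \<alpha>)"
    using arccos_min_mult_sin_ge[of \<alpha> "0.6231" t] t Xset_angle_bounds[OF assms(2) eps]
          sin_Xset_angle_le[OF assms(2,3)] by (simp_all add: \<alpha>_def)
  moreover have "51.45 * pi / 180 < pi / 2 - \<alpha>" "102.9 * pi / 180 < pi - 2 * \<alpha>"
    using Xset_angle_lt[OF assms(2,3)] by (simp_all add: \<alpha>_def)
  ultimately have "51.45 * pi / 180 + arccos (0.6231 * t) < \<phi>" "102.9 * pi / 180 < \<phi>"
    by linarith+
  then show ?thesis
    unfolding angle_deg_eq_vertex_angle t_def \<phi>_def
    by (simp add: divide_less_eq less_divide_eq algebra_simps)
qed

end
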